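(* Let $\lambda$ be a nonzero real number. For every integer $n\ge 0$ and every $x$ in a neighborhood of $0$, $$\mathrm{bel}_{n,\lambda}(x)=\mathrm{Bel}_{n,\lambda}\!\left(\frac{x}{1+\lambda x}\right).$$
   Context: For nonzero $\lambda\in\mathbb{R}$, $e_{\lambda}(t)=(1+\lambda t)^{1/\lambda}$. The degenerate Bell polynomials $\mathrm{Bel}_{n,\lambda}(x)$ are defined by $e_{\lambda}\big(x(e^{t}-1)\big)=\sum_{n=0}^{\infty}\mathrm{Bel}_{n,\lambda}(x)\frac{t^{n}}{n!}$. The degenerate Bell polynomials of the second kind $\mathrm{bel}_{n,\lambda}(x)$ are defined by $e_{\lambda}(xe^{t})\cdot e_{\lambda}(x)^{-1}=\sum_{n=0}^{\infty}\mathrm{bel}_{n,\lambda}(x)\frac{t^{n}}{n!}$. *)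

theory Defs
  imports "HOL-Analysis.Analysis"
begin

definition deg_exp :: "real \<Rightarrow> real \<Rightarrow> real" where
  "deg_exp lam t = (1 + lam * t) powr (1 / lam)"

text \<open>Coefficients of t^n/n! of a generating function are its n-th derivatives at t = 0.\<close>
definition egf_coeff :: "(real \<Rightarrow> real) \<Rightarrow> nat \<Rightarrow> real" where
  "egf_coeff f n = (deriv ^^ n) f 0"

definition deg_Bel :: "nat \<Rightarrow> real \<Rightarrow> real \<Rightarrow> real" where
  "deg_Bel n lam x = egf_coeff (\<lambda>t. deg_exp lam (x * (exp t - 1))) n"

definition deg_bel :: "nat \<Rightarrow> real \<Rightarrow> real \<Rightarrow> real" where
  "deg_bel n lam x = egf_coeff (\<lambda>t. deg_exp lam (x * exp t) * inverse (deg_exp lam x)) n"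

end

theory Submission
  imports Defs
begin

(* Since (1 + lam x e^t) / (1 + lam x) = 1 + lam (x / (1 + lam x)) (e^t - 1), the two generating
   functions agree for all t near 0 as soon as 1 + lam x > 0, i.e. for all x near 0; functions
   that agree near 0 have the same derivatives at 0. *)

lemma egf_coeff_cong_ev:
  assumes "\<forall>\<^sub>F t in nhds 0. f t = g t"
  shows "egf_coeff f n = egf_coeff g n"
  unfolding egf_coeff_def by (intro higher_deriv_cong_ev assms refl)

lemma deg_exp_quotient:
  assumes "1 + lam * x > 0" "1 + lam * (x * y) \<ge> 0"
  shows "deg_exp lam (x * y) * inverse (deg_exp lam x) = deg_exp lam (x / (1 + lam * x) * (y - 1))"
proof -
  have "1 + lam * (x / (1 + lam * x) * (y - 1)) = (1 + lam * (x * y)) / (1 + lam * x)"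
    using assms(1) by (simp add: field_simps)
  with assms show ?thesis
    unfolding deg_exp_def by (simp only: powr_divide less_imp_le) (simp add: divide_inverse)
qed

theorem theorem6:
  fixes lam :: real
  assumes "lam \<noteq> 0"
  shows "\<forall>\<^sub>F x in nhds 0. \<forall>n. deg_bel n lam x = deg_Bel n lam (x / (1 + lam * x))"
proof -
  have "((\<lambda>x. 1 + lam * x) \<longlongrightarrow> 1 + lam * 0) (nhds 0)"
    by (intro tendsto_intros) (rule filterlim_ident)
  then have "\<forall>\<^sub>F x in nhds 0. 1 + lam * x > 0"
    by (rule order_tendstoD(1)) simp
  then show ?thesis
  proof eventually_elim
    case (elim x)
    have "((\<lambda>t. 1 + lam * (x * exp t)) \<longlongrightarrow> 1 + lam * (x * exp 0)) (nhds 0)"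
      by (intro tendsto_intros) (rule filterlim_ident)
    then have "\<forall>\<^sub>F t in nhds 0. 1 + lam * (x * exp t) > 0"
      by (rule order_tendstoD(1)) (simp add: elim)
    then have "\<forall>\<^sub>F t in nhds 0. deg_exp lam (x * exp t) * inverse (deg_exp lam x)
                 = deg_exp lam (x / (1 + lam * x) * (exp t - 1))"
      by eventually_elim (simp add: deg_exp_quotient elim)
    then show ?case
      unfolding deg_bel_def deg_Bel_def by (auto intro: egf_coeff_cong_ev)
  qed
qed

end
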